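(* Let $M>0$, $\delta_0>0$ and $l_0\in\mathbb{R}$, and let $w_0\in L^\infty((-\infty,l_0])$ satisfy $w_0(x)=0$ for all sufficiently large negative $x$. Let $w$ be the (bounded) solution of $w_t=w_{xx}-Mw_x^2$ for $x<l_0$, $t>0$, with $w(x,0)=w_0(x)$ for $x\le l_0$ and $w(l_0,t)=\delta_0$ for $t\ge0$. Then $w(x,t)\to\delta_0$ as $t\to\infty$ locally uniformly in $x\in(-\infty,l_0]$. *)

theory Defs
  imports "HOL-Analysis.Analysis"
begin

end

theory Submission
  imports Defs
begin

(* The Hopf-Cole substitution v = exp (-M w) turns w_t = w_xx - M w_x^2 into the heat equation
   v_t = v_xx, with v bounded and v = exp (-M \<delta>0) on the boundary x = l0. On [l0 - R, l0] the
   deviation |v - exp (-M \<delta>0)| is dominated, by the parabolic maximum principle, by a barrier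
   (K / R) (l0 - x) + 2 K exp (-\<omega>^2 t) cos (\<omega> (l0 - x)) with \<omega> = pi / (3 R). Taking R large
   and then t large makes it uniformly small on any [a, l0]; since ln is Lipschitz away from 0,
   the same holds for w. Only the boundedness of w enters. *)

lemma deriv_nonneg_at_left_max:
  fixes f :: "real \<Rightarrow> real"
  assumes der: "(f has_real_derivative l) (at t)" and "0 < d"
    and left_max: "\<And>s. t - d < s \<Longrightarrow> s \<le> t \<Longrightarrow> f s \<le> f t"
  shows "0 \<le> l"
proof (rule ccontr)
  assume "\<not> 0 \<le> l"
  then obtain d' where "d' > 0" and dec: "\<And>h. 0 < h \<Longrightarrow> h < d' \<Longrightarrow> f t < f (t - h)"
    using DERIV_neg_dec_left[OF der] by force
  define h where "h = min d d' / 2"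
  have "0 < h" "h < d" "h < d'" using \<open>0 < d\<close> \<open>d' > 0\<close> by (auto simp: h_def)
  then show False using dec left_max[of "t - h"] by force
qed

lemma second_deriv_nonpos_at_local_max:
  fixes f f' :: "real \<Rightarrow> real"
  assumes "0 < d"
    and der: "\<And>y. \<bar>y - x\<bar> < d \<Longrightarrow> (f has_real_derivative f' y) (at y)"
    and der2: "(f' has_real_derivative l) (at x)"
    and local_max: "\<And>y. \<bar>y - x\<bar> < d \<Longrightarrow> f y \<le> f x"
  shows "l \<le> 0"
proof (rule ccontr)
  assume "\<not> l \<le> 0"
  have "f' x = 0"
    using DERIV_local_max[OF der[of x] \<open>0 < d\<close>] local_max by (simp add: abs_minus_commute \<open>0 < d\<close>)
  with \<open>\<not> l \<le> 0\<close> obtain d' where "d' > 0" and inc: "\<And>h. 0 < h \<Longrightarrow> h < d' \<Longrightarrow> 0 < f' (x + h)"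
    using DERIV_pos_inc_right[OF der2] by force
  define h where "h = min d d' / 2"
  have h: "0 < h" "h < d" "h < d'" using \<open>0 < d\<close> \<open>d' > 0\<close> by (auto simp: h_def)
  obtain \<xi> where "x < \<xi>" "\<xi> < x + h" "f (x + h) - f x = h * f' \<xi>"
    using MVT2[of x "x + h" f f'] h der by force
  moreover have "0 < f' \<xi>" using inc[of "\<xi> - x"] \<open>x < \<xi>\<close> \<open>\<xi> < x + h\<close> h by force
  ultimately have "f x < f (x + h)" using h by (simp add: algebra_simps)
  then show False using local_max[of "x + h"] h by simp
qed

lemma parabolic_max_principle_strict:
  fixes z zt zx zxx :: "real \<Rightarrow> real \<Rightarrow> real" and a b \<tau> T :: real
  assumes cont: "continuous_on ({a..b} \<times> {\<tau>..T}) (\<lambda>(x, t). z x t)"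
    and dt: "\<And>x t. a < x \<Longrightarrow> x < b \<Longrightarrow> \<tau> < t \<Longrightarrow> t \<le> T \<Longrightarrow>
      ((\<lambda>s. z x s) has_real_derivative zt x t) (at t)"
    and dx: "\<And>x t. a < x \<Longrightarrow> x < b \<Longrightarrow> \<tau> < t \<Longrightarrow> t \<le> T \<Longrightarrow>
      ((\<lambda>y. z y t) has_real_derivative zx x t) (at x)"
    and dxx: "\<And>x t. a < x \<Longrightarrow> x < b \<Longrightarrow> \<tau> < t \<Longrightarrow> t \<le> T \<Longrightarrow>
      ((\<lambda>y. zx y t) has_real_derivative zxx x t) (at x)"
    and strict_subsol: "\<And>x t. a < x \<Longrightarrow> x < b \<Longrightarrow> \<tau> < t \<Longrightarrow> t \<le> T \<Longrightarrow> zt x t < zxx x t"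
    and left: "\<And>t. \<tau> \<le> t \<Longrightarrow> t \<le> T \<Longrightarrow> z a t \<le> 0"
    and right: "\<And>t. \<tau> \<le> t \<Longrightarrow> t \<le> T \<Longrightarrow> z b t \<le> 0"
    and initial: "\<And>x. a \<le> x \<Longrightarrow> x \<le> b \<Longrightarrow> z x \<tau> \<le> 0"
    and x: "a \<le> x" "x \<le> b" and t: "\<tau> \<le> t" "t \<le> T"
  shows "z x t \<le> 0"
proof -
  define S where "S = {a..b} \<times> {\<tau>..T}"
  have "compact S" "S \<noteq> {}"
    using x t by (auto simp: S_def intro!: compact_Times)
  then obtain xs ts where "(xs, ts) \<in> S" and "\<And>p. p \<in> S \<Longrightarrow> (\<lambda>(x, t). z x t) p \<le> z xs ts"
    using continuous_attains_sup[of S "\<lambda>(x, t). z x t"] cont by (auto simp: S_def)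
  then have xs: "a \<le> xs" "xs \<le> b" and ts: "\<tau> \<le> ts" "ts \<le> T"
    and zmax: "\<And>y s. a \<le> y \<Longrightarrow> y \<le> b \<Longrightarrow> \<tau> \<le> s \<Longrightarrow> s \<le> T \<Longrightarrow> z y s \<le> z xs ts"
    by (auto simp: S_def)
  show ?thesis
  proof (cases "z xs ts \<le> 0")
    case True
    then show ?thesis using zmax[OF x t] by simp
  next
    case False
    then have "xs \<noteq> a" "xs \<noteq> b" "ts \<noteq> \<tau>"
      using left[OF ts] right[OF ts] initial[OF xs] by auto
    with xs ts have xs': "a < xs" "xs < b" and ts': "\<tau> < ts"
      by auto
    have "0 \<le> zt xs ts"
      by (rule deriv_nonneg_at_left_max[where d = "ts - \<tau>", OF dt[OF xs' ts' ts(2)]])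
        (use ts' ts in \<open>auto intro!: zmax xs\<close>)
    moreover have "zxx xs ts \<le> 0"
    proof (rule second_deriv_nonpos_at_local_max[where f = "\<lambda>y. z y ts"])
      show "0 < min (xs - a) (b - xs)" using xs' by simp
      show "z y ts \<le> z xs ts" if "\<bar>y - xs\<bar> < min (xs - a) (b - xs)" for y
        using zmax[of y ts] that ts by auto
    qed (use xs' ts' ts in \<open>auto intro!: dx dxx\<close>)
    ultimately show ?thesis
      using strict_subsol[OF xs' ts' ts(2)] by simp
  qed
qed

lemma parabolic_max_principle:
  fixes z zt zx zxx :: "real \<Rightarrow> real \<Rightarrow> real" and a b \<tau> T :: real
  assumes cont: "continuous_on ({a..b} \<times> {\<tau>..T}) (\<lambda>(x, t). z x t)"
    and dt: "\<And>x t. a < x \<Longrightarrow> x < b \<Longrightarrow> \<tau> < t \<Longrightarrow> t \<le> T \<Longrightarrow>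
      ((\<lambda>s. z x s) has_real_derivative zt x t) (at t)"
    and dx: "\<And>x t. a < x \<Longrightarrow> x < b \<Longrightarrow> \<tau> < t \<Longrightarrow> t \<le> T \<Longrightarrow>
      ((\<lambda>y. z y t) has_real_derivative zx x t) (at x)"
    and dxx: "\<And>x t. a < x \<Longrightarrow> x < b \<Longrightarrow> \<tau> < t \<Longrightarrow> t \<le> T \<Longrightarrow>
      ((\<lambda>y. zx y t) has_real_derivative zxx x t) (at x)"
    and subsol: "\<And>x t. a < x \<Longrightarrow> x < b \<Longrightarrow> \<tau> < t \<Longrightarrow> t \<le> T \<Longrightarrow> zt x t \<le> zxx x t"
    and left: "\<And>t. \<tau> \<le> t \<Longrightarrow> t \<le> T \<Longrightarrow> z a t \<le> 0"
    and right: "\<And>t. \<tau> \<le> t \<Longrightarrow> t \<le> T \<Longrightarrow> z b t \<le> 0"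
    and initial: "\<And>x. a \<le> x \<Longrightarrow> x \<le> b \<Longrightarrow> z x \<tau> \<le> 0"
    and x: "a \<le> x" "x \<le> b" and t: "\<tau> \<le> t" "t \<le> T"
  shows "z x t \<le> 0"
proof (rule field_le_epsilon)
  fix e :: real
  assume "0 < e"
  define \<epsilon> where "\<epsilon> = e / (t - \<tau> + 1)"
  have "0 < \<epsilon>" "\<epsilon> * (t - \<tau>) \<le> e"
    using \<open>0 < e\<close> t by (simp_all add: \<epsilon>_def field_simps)
  have drift_nonneg: "0 \<le> \<epsilon> * (s - \<tau>)" if "\<tau> \<le> s" for s
    using \<open>0 < \<epsilon>\<close> that by simp
  have "z x t - \<epsilon> * (t - \<tau>) \<le> 0"
  proof (rule parabolic_max_principle_strict[where z = "\<lambda>x t. z x t - \<epsilon> * (t - \<tau>)"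
        and zt = "\<lambda>x t. zt x t - \<epsilon>" and zx = zx and zxx = zxx])
    show "continuous_on ({a..b} \<times> {\<tau>..T}) (\<lambda>(x, t). z x t - \<epsilon> * (t - \<tau>))"
      using cont by (auto simp: case_prod_unfold intro!: continuous_intros)
    show "((\<lambda>s. z y s - \<epsilon> * (s - \<tau>)) has_real_derivative zt y s - \<epsilon>) (at s)"
      if "a < y" "y < b" "\<tau> < s" "s \<le> T" for y s
      using dt[OF that] by (auto intro!: derivative_eq_intros)
    show "zt y s - \<epsilon> < zxx y s" if "a < y" "y < b" "\<tau> < s" "s \<le> T" for y s
      using subsol[OF that] \<open>0 < \<epsilon>\<close> by simp
    show "((\<lambda>y. z y s - \<epsilon> * (s - \<tau>)) has_real_derivative zx y s) (at y)"
      if "a < y" "y < b" "\<tau> < s" "s \<le> T" for y s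
      using dx[OF that] by (auto intro!: derivative_eq_intros)
    show "z a s - \<epsilon> * (s - \<tau>) \<le> 0" "z b s - \<epsilon> * (s - \<tau>) \<le> 0" if "\<tau> \<le> s" "s \<le> T" for s
      using left[OF that] right[OF that] drift_nonneg[OF that(1)] by simp_all
  qed (use dxx initial x t in auto)
  then show "z x t \<le> 0 + e"
    using \<open>\<epsilon> * (t - \<tau>) \<le> e\<close> by simp
qed

(* Used with A = K / R, B = 2 K and \<omega> = pi / (3 R): on [l - R, l] the linear part dominates a
   bound K at the far end x = l - R, and the cosine mode, which stays above 1/2 there, dominates it
   at the initial time \<tau>; both parts solve the heat equation. *)
definition heat_barrier :: "real \<Rightarrow> real \<Rightarrow> real \<Rightarrow> real \<Rightarrow> real \<Rightarrow> real \<Rightarrow> real \<Rightarrow> real" where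
  "heat_barrier A B \<omega> l \<tau> x t = A * (l - x) + B * exp (- (\<omega>\<^sup>2 * (t - \<tau>))) * cos (\<omega> * (l - x))"

lemma heat_barrier_has_derivatives:
  "((\<lambda>s. heat_barrier A B \<omega> l \<tau> x s) has_real_derivative
      - (\<omega>\<^sup>2 * B * exp (- (\<omega>\<^sup>2 * (t - \<tau>))) * cos (\<omega> * (l - x)))) (at t)"
  "((\<lambda>y. heat_barrier A B \<omega> l \<tau> y t) has_real_derivative
      - A + \<omega> * B * exp (- (\<omega>\<^sup>2 * (t - \<tau>))) * sin (\<omega> * (l - x))) (at x)"
  "((\<lambda>y. - A + \<omega> * B * exp (- (\<omega>\<^sup>2 * (t - \<tau>))) * sin (\<omega> * (l - y))) has_real_derivative
      - (\<omega>\<^sup>2 * B * exp (- (\<omega>\<^sup>2 * (t - \<tau>))) * cos (\<omega> * (l - x)))) (at x)"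
  unfolding heat_barrier_def
  by (auto intro!: derivative_eq_intros simp: power2_eq_square algebra_simps)

lemma cos_ge_half: "0 \<le> x \<Longrightarrow> x \<le> pi / 3 \<Longrightarrow> 1 / 2 \<le> cos x"
  using cos_monotone_0_pi_le[of x "pi / 3"] by (simp add: cos_60)

lemma heat_barrier_lower:
  assumes "0 \<le> B" "0 \<le> \<omega> * (l - x)" "\<omega> * (l - x) \<le> pi / 3"
  shows "A * (l - x) + B / 2 * exp (- (\<omega>\<^sup>2 * (t - \<tau>))) \<le> heat_barrier A B \<omega> l \<tau> x t"
proof -
  have "B * exp (- (\<omega>\<^sup>2 * (t - \<tau>))) * (1 / 2) \<le> B * exp (- (\<omega>\<^sup>2 * (t - \<tau>))) * cos (\<omega> * (l - x))"
    using assms cos_ge_half by (intro mult_left_mono) auto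
  then show ?thesis by (simp add: heat_barrier_def)
qed

lemma heat_barrier_upper:
  assumes "0 \<le> B"
  shows "heat_barrier A B \<omega> l \<tau> x t \<le> A * (l - x) + B * exp (- (\<omega>\<^sup>2 * (t - \<tau>)))"
proof -
  have "B * exp (- (\<omega>\<^sup>2 * (t - \<tau>))) * cos (\<omega> * (l - x)) \<le> B * exp (- (\<omega>\<^sup>2 * (t - \<tau>))) * 1"
    using assms by (intro mult_left_mono) auto
  then show ?thesis by (simp add: heat_barrier_def)
qed

lemma exp_decay_tendsto_zero:
  fixes \<omega> \<tau> :: real
  assumes "\<omega> \<noteq> 0"
  shows "((\<lambda>t. exp (- (\<omega>\<^sup>2 * (t - \<tau>)))) \<longlongrightarrow> 0) at_top"
proof (rule filterlim_compose[OF exp_at_bot])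
  have "filterlim (\<lambda>t. \<omega>\<^sup>2 * (t - \<tau>)) at_top at_top"
    using assms
    by (intro filterlim_tendsto_pos_mult_at_top[OF tendsto_const])
      (auto intro: filterlim_tendsto_add_at_top[of "\<lambda>_. - \<tau>", OF tendsto_const filterlim_ident, simplified])
  then show "filterlim (\<lambda>t. - (\<omega>\<^sup>2 * (t - \<tau>))) at_bot at_top"
    by (simp add: filterlim_uminus_at_bot)
qed

lemma heat_subsolution_le_barrier:
  fixes u ut ux uxx :: "real \<Rightarrow> real \<Rightarrow> real" and K R \<omega> l \<tau> x t :: real
  assumes cont: "continuous_on ({..l} \<times> {0<..}) (\<lambda>(x, t). u x t)"
    and dt: "\<And>x t. x < l \<Longrightarrow> 0 < t \<Longrightarrow> ((\<lambda>s. u x s) has_real_derivative ut x t) (at t)"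
    and dx: "\<And>x t. x < l \<Longrightarrow> 0 < t \<Longrightarrow> ((\<lambda>y. u y t) has_real_derivative ux x t) (at x)"
    and dxx: "\<And>x t. x < l \<Longrightarrow> 0 < t \<Longrightarrow> ((\<lambda>y. ux y t) has_real_derivative uxx x t) (at x)"
    and subsol: "\<And>x t. x < l \<Longrightarrow> 0 < t \<Longrightarrow> ut x t \<le> uxx x t"
    and bound: "\<And>x t. x \<le> l \<Longrightarrow> \<tau> \<le> t \<Longrightarrow> u x t \<le> K"
    and bdry: "\<And>t. \<tau> \<le> t \<Longrightarrow> u l t \<le> 0"
    and "0 < \<tau>" "0 < R" "0 \<le> K" "0 \<le> \<omega>" "\<omega> * R \<le> pi / 3"
    and x: "l - R \<le> x" "x \<le> l" and t: "\<tau> \<le> t"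
  shows "u x t \<le> heat_barrier (K / R) (2 * K) \<omega> l \<tau> x t"
proof -
  let ?\<phi> = "heat_barrier (K / R) (2 * K) \<omega> l \<tau>"
  define \<phi>t where "\<phi>t x t = - (\<omega>\<^sup>2 * (2 * K) * exp (- (\<omega>\<^sup>2 * (t - \<tau>))) * cos (\<omega> * (l - x)))" for x t
  define \<phi>x where "\<phi>x x t = - (K / R) + \<omega> * (2 * K) * exp (- (\<omega>\<^sup>2 * (t - \<tau>))) * sin (\<omega> * (l - x))"
    for x t
  have \<phi>_lower: "K / R * (l - y) + K * exp (- (\<omega>\<^sup>2 * (s - \<tau>))) \<le> ?\<phi> y s"
    if "l - R \<le> y" "y \<le> l" for y s
  proof (rule order_trans[OF _ heat_barrier_lower])
    have "\<omega> * (l - y) \<le> \<omega> * R"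
      using that \<open>0 \<le> \<omega>\<close> by (intro mult_left_mono) auto
    then show "\<omega> * (l - y) \<le> pi / 3"
      using \<open>\<omega> * R \<le> pi / 3\<close> by linarith
  qed (use that \<open>0 < R\<close> \<open>0 \<le> K\<close> \<open>0 \<le> \<omega>\<close> in auto)
  have K_exp: "0 \<le> K * exp r" for r
    using \<open>0 \<le> K\<close> by simp
  have "u x t - ?\<phi> x t \<le> 0"
  proof (rule parabolic_max_principle[where a = "l - R" and b = l and T = t
        and z = "\<lambda>x t. u x t - ?\<phi> x t" and
        zt = "\<lambda>x t. ut x t - \<phi>t x t" and zx = "\<lambda>x t. ux x t - \<phi>x x t" and zxx = "\<lambda>x t. uxx x t - \<phi>t x t"])
    have "continuous_on ({l - R..l} \<times> {\<tau>..t}) (\<lambda>(x, t). u x t)"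
      by (rule continuous_on_subset[OF cont]) (use \<open>0 < \<tau>\<close> in auto)
    then show "continuous_on ({l - R..l} \<times> {\<tau>..t}) (\<lambda>(x, t). u x t - ?\<phi> x t)"
      using \<open>0 < R\<close> by (auto simp: case_prod_unfold heat_barrier_def intro!: continuous_intros)
    show "((\<lambda>s. u y s - ?\<phi> y s) has_real_derivative ut y s - \<phi>t y s) (at s)"
      if "l - R < y" "y < l" "\<tau> < s" "s \<le> t" for y s
      unfolding \<phi>t_def using that \<open>0 < \<tau>\<close> by (intro DERIV_diff dt heat_barrier_has_derivatives) auto
    show "((\<lambda>y. u y s - ?\<phi> y s) has_real_derivative ux y s - \<phi>x y s) (at y)"
      if "l - R < y" "y < l" "\<tau> < s" "s \<le> t" for y s
      unfolding \<phi>x_def using that \<open>0 < \<tau>\<close> by (intro DERIV_diff dx heat_barrier_has_derivatives) auto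
    show "((\<lambda>y. ux y s - \<phi>x y s) has_real_derivative uxx y s - \<phi>t y s) (at y)"
      if "l - R < y" "y < l" "\<tau> < s" "s \<le> t" for y s
      unfolding \<phi>x_def \<phi>t_def using that \<open>0 < \<tau>\<close> by (intro DERIV_diff dxx heat_barrier_has_derivatives) auto
    show "ut y s - \<phi>t y s \<le> uxx y s - \<phi>t y s"
      if "l - R < y" "y < l" "\<tau> < s" "s \<le> t" for y s
      using subsol that \<open>0 < \<tau>\<close> by simp
    show "u (l - R) s - ?\<phi> (l - R) s \<le> 0" if "\<tau> \<le> s" "s \<le> t" for s
      using bound[of "l - R" s] \<phi>_lower[of "l - R" s] K_exp[of "- (\<omega>\<^sup>2 * (s - \<tau>))"] that \<open>0 < R\<close> by simp
    show "u l s - ?\<phi> l s \<le> 0" if "\<tau> \<le> s" "s \<le> t" for s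
      using bdry[of s] \<phi>_lower[of l s] K_exp[of "- (\<omega>\<^sup>2 * (s - \<tau>))"] that \<open>0 < R\<close> by simp
    show "u y \<tau> - ?\<phi> y \<tau> \<le> 0" if "l - R \<le> y" "y \<le> l" for y
    proof -
      have "0 \<le> K * (l - y) / R"
        using that \<open>0 < R\<close> \<open>0 \<le> K\<close> by simp
      then show ?thesis
        using bound[of y \<tau>] \<phi>_lower[of y \<tau>] that by simp
    qed
  qed (use x t in auto)
  then show ?thesis by simp
qed

lemma heat_solution_deviation_le:
  fixes v vt vx vxx :: "real \<Rightarrow> real \<Rightarrow> real" and K c l R \<tau> x t :: real
  assumes cont: "continuous_on ({..l} \<times> {0<..}) (\<lambda>(x, t). v x t)"
    and "\<And>x t. x < l \<Longrightarrow> 0 < t \<Longrightarrow> ((\<lambda>s. v x s) has_real_derivative vt x t) (at t)"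
    and "\<And>x t. x < l \<Longrightarrow> 0 < t \<Longrightarrow> ((\<lambda>y. v y t) has_real_derivative vx x t) (at x)"
    and "\<And>x t. x < l \<Longrightarrow> 0 < t \<Longrightarrow> ((\<lambda>y. vx y t) has_real_derivative vxx x t) (at x)"
    and "\<And>x t. x < l \<Longrightarrow> 0 < t \<Longrightarrow> vt x t = vxx x t"
    and bound: "\<And>x t. x \<le> l \<Longrightarrow> 0 < t \<Longrightarrow> \<bar>v x t - c\<bar> \<le> K"
    and bdry: "\<And>t. 0 < t \<Longrightarrow> v l t = c"
    and "0 < \<tau>" "0 < R" "l - R \<le> x" "x \<le> l" "\<tau> \<le> t"
  shows "\<bar>v x t - c\<bar> \<le> K / R * (l - x) + 2 * K * exp (- ((pi / (3 * R))\<^sup>2 * (t - \<tau>)))"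
proof -
  let ?\<omega> = "pi / (3 * R)"
  have "0 \<le> K"
    using bound[of l \<tau>] bdry[of \<tau>] \<open>0 < \<tau>\<close> by simp
  have \<omega>: "0 \<le> ?\<omega>" "?\<omega> * R \<le> pi / 3"
    using \<open>0 < R\<close> by auto
  have cont': "continuous_on ({..l} \<times> {0<..}) (\<lambda>p. v (fst p) (snd p))"
    using cont by (simp add: case_prod_unfold)
  have "v x t - c \<le> heat_barrier (K / R) (2 * K) ?\<omega> l \<tau> x t"
    by (rule heat_subsolution_le_barrier[where u = "\<lambda>x t. v x t - c" and ut = vt and ux = vx and uxx = vxx])
      (use assms \<omega> \<open>0 \<le> K\<close> in
        \<open>auto simp: abs_le_iff case_prod_unfold intro!: derivative_eq_intros continuous_intros cont'\<close>)
  moreover have "c - v x t \<le> heat_barrier (K / R) (2 * K) ?\<omega> l \<tau> x t"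
    by (rule heat_subsolution_le_barrier[where u = "\<lambda>x t. c - v x t" and ut = "\<lambda>x t. - vt x t"
          and ux = "\<lambda>x t. - vx x t" and uxx = "\<lambda>x t. - vxx x t"])
      (use assms \<omega> \<open>0 \<le> K\<close> in
        \<open>auto simp: abs_le_iff case_prod_unfold intro!: derivative_eq_intros continuous_intros cont'\<close>)
  moreover have "heat_barrier (K / R) (2 * K) ?\<omega> l \<tau> x t \<le> K / R * (l - x) + 2 * K * exp (- (?\<omega>\<^sup>2 * (t - \<tau>)))"
    using \<open>0 \<le> K\<close> by (rule heat_barrier_upper[of "2 * K", simplified])
  ultimately show ?thesis by linarith
qed

lemma heat_solution_uniform_limit_boundary_value:
  fixes v vt vx vxx :: "real \<Rightarrow> real \<Rightarrow> real" and K c l a :: real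
  assumes cont: "continuous_on ({..l} \<times> {0<..}) (\<lambda>(x, t). v x t)"
    and dt: "\<And>x t. x < l \<Longrightarrow> 0 < t \<Longrightarrow> ((\<lambda>s. v x s) has_real_derivative vt x t) (at t)"
    and dx: "\<And>x t. x < l \<Longrightarrow> 0 < t \<Longrightarrow> ((\<lambda>y. v y t) has_real_derivative vx x t) (at x)"
    and dxx: "\<And>x t. x < l \<Longrightarrow> 0 < t \<Longrightarrow> ((\<lambda>y. vx y t) has_real_derivative vxx x t) (at x)"
    and heat: "\<And>x t. x < l \<Longrightarrow> 0 < t \<Longrightarrow> vt x t = vxx x t"
    and bound: "\<And>x t. x \<le> l \<Longrightarrow> 0 < t \<Longrightarrow> \<bar>v x t - c\<bar> \<le> K"
    and bdry: "\<And>t. 0 < t \<Longrightarrow> v l t = c"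
    and "a \<le> l"
  shows "uniform_limit {a..l} (\<lambda>t x. v x t) (\<lambda>x. c) at_top"
proof -
  have "0 \<le> K"
    using bound[of l 1] bdry[of 1] by simp
  note deviation = heat_solution_deviation_le[where \<tau> = 1, OF cont dt dx dxx heat bound bdry]
  show ?thesis
  proof (rule uniform_limitI)
    fix \<epsilon> :: real
    assume "0 < \<epsilon>"
    define R where "R = 2 * K * (l - a) / \<epsilon> + (l - a) + 1"
    have "0 \<le> 2 * K * (l - a) / \<epsilon>"
      using \<open>0 \<le> K\<close> \<open>0 < \<epsilon>\<close> \<open>a \<le> l\<close> by simp
    then have "0 < R" "l - R \<le> a"
      using \<open>a \<le> l\<close> by (auto simp: R_def)
    have "\<epsilon> * R = 2 * K * (l - a) + \<epsilon> * (l - a + 1)"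
      using \<open>0 < \<epsilon>\<close> by (simp add: R_def field_simps)
    moreover have "0 < \<epsilon> * (l - a + 1)"
      using \<open>0 < \<epsilon>\<close> \<open>a \<le> l\<close> by simp
    ultimately have slope: "K / R * (l - a) < \<epsilon> / 2"
      using \<open>0 < R\<close> by (simp add: field_simps)
    have "((\<lambda>t. 2 * K * exp (- ((pi / (3 * R))\<^sup>2 * (t - 1)))) \<longlongrightarrow> 2 * K * 0) at_top"
      using \<open>0 < R\<close> by (intro tendsto_mult_left exp_decay_tendsto_zero) auto
    then have "\<forall>\<^sub>F t in at_top. 2 * K * exp (- ((pi / (3 * R))\<^sup>2 * (t - 1))) < \<epsilon> / 2"
      using \<open>0 < \<epsilon>\<close> by (intro order_tendstoD(2)) auto
    moreover have "\<forall>\<^sub>F t in at_top. 1 \<le> (t::real)"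
      by (rule eventually_ge_at_top)
    ultimately show "\<forall>\<^sub>F t in at_top. \<forall>x\<in>{a..l}. dist (v x t) c < \<epsilon>"
    proof eventually_elim
      case (elim t)
      show ?case
      proof
        fix x :: real
        assume "x \<in> {a..l}"
        then have "K / R * (l - x) \<le> K / R * (l - a)"
          using \<open>0 \<le> K\<close> \<open>0 < R\<close> by (intro mult_left_mono) auto
        moreover have "\<bar>v x t - c\<bar> \<le> K / R * (l - x) + 2 * K * exp (- ((pi / (3 * R))\<^sup>2 * (t - 1)))"
          using deviation[of R x t] \<open>0 < R\<close> \<open>l - R \<le> a\<close> \<open>x \<in> {a..l}\<close> elim by simp
        ultimately show "dist (v x t) c < \<epsilon>"
          unfolding dist_real_def using elim slope by linarith
      qed
    qed
  qed
qed

lemma hopf_cole_has_derivatives: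
  fixes w :: "real \<Rightarrow> real \<Rightarrow> real" and wx :: "real \<Rightarrow> real" and M wt wxx x t :: real
  assumes dt: "((\<lambda>s. w x s) has_real_derivative wt) (at t)"
    and dx: "((\<lambda>y. w y t) has_real_derivative wx x) (at x)"
    and dxx: "(wx has_real_derivative wxx) (at x)"
    and pde: "wt = wxx - M * (wx x)\<^sup>2"
  shows "((\<lambda>s. exp (- M * w x s)) has_real_derivative - M * exp (- M * w x t) * wt) (at t)"
    and "((\<lambda>y. exp (- M * w y t)) has_real_derivative - M * exp (- M * w x t) * wx x) (at x)"
    and "((\<lambda>y. - M * exp (- M * w y t) * wx y) has_real_derivative - M * exp (- M * w x t) * wt) (at x)"
  using dt dx dxx unfolding pde
  by (auto intro!: derivative_eq_intros simp: power2_eq_square algebra_simps)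

lemma ln_lipschitz_on_atLeast:
  fixes m :: real
  assumes "0 < m"
  shows "(1 / m)-lipschitz_on {m..} ln"
proof (rule lipschitz_onI)
  fix x y :: real
  assume "x \<in> {m..}" "y \<in> {m..}"
  then have "0 < x" "0 < y" "m \<le> x" "m \<le> y"
    using assms by auto
  have "ln x - ln y \<le> (x - y) / y"
    using \<open>0 < x\<close> \<open>0 < y\<close> by (rule ln_diff_le)
  also have "\<dots> \<le> \<bar>x - y\<bar> / m"
    using \<open>m \<le> y\<close> assms by (intro frac_le) auto
  finally have up: "ln x - ln y \<le> \<bar>x - y\<bar> / m" .
  have "ln y - ln x \<le> (y - x) / x"
    using \<open>0 < y\<close> \<open>0 < x\<close> by (rule ln_diff_le)
  also have "\<dots> \<le> \<bar>x - y\<bar> / m"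
    using \<open>m \<le> x\<close> assms by (intro frac_le) auto
  finally have "ln y - ln x \<le> \<bar>x - y\<bar> / m" .
  with up show "dist (ln x) (ln y) \<le> 1 / m * dist x y"
    by (simp add: dist_real_def)
qed (use assms in simp)

lemma uniform_limit_ln:
  fixes f :: "'a \<Rightarrow> 'b \<Rightarrow> real" and g :: "'b \<Rightarrow> real"
  assumes lim: "uniform_limit S f g F" and "0 < m"
    and lower: "\<forall>\<^sub>F n in F. \<forall>x\<in>S. m \<le> f n x"
  shows "uniform_limit S (\<lambda>n x. ln (f n x)) (\<lambda>x. ln (g x)) F"
proof (rule uniform_limit_compose_uniformly_continuous_on[OF lim])
  show "uniformly_continuous_on {m..} ln"
    by (rule lipschitz_on_uniformly_continuous[OF ln_lipschitz_on_atLeast[OF \<open>0 < m\<close>]])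
  show "\<forall>\<^sub>F n in F. \<forall>x\<in>S. f n x \<in> {m..}"
    using lower by simp
qed simp

lemma uniform_limit_from_exp_neg_mult:
  fixes f :: "'a \<Rightarrow> 'b \<Rightarrow> real" and g :: "'b \<Rightarrow> real"
  assumes lim: "uniform_limit S (\<lambda>n x. exp (- M * f n x)) (\<lambda>x. exp (- M * g x)) F"
    and "0 < M" and upper: "\<forall>\<^sub>F n in F. \<forall>x\<in>S. f n x \<le> B"
  shows "uniform_limit S f g F"
proof -
  have "\<forall>\<^sub>F n in F. \<forall>x\<in>S. exp (- M * B) \<le> exp (- M * f n x)"
    using upper by eventually_elim (use \<open>0 < M\<close> in auto)
  from uniform_limit_ln[OF lim exp_gt_zero this]
  have "uniform_limit S (\<lambda>n x. ln (exp (- M * f n x))) (\<lambda>x. ln (exp (- M * g x))) F" .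
  then have "uniform_limit S (\<lambda>n x. - M * f n x) (\<lambda>x. - M * g x) F"
    by simp
  then have "uniform_limit S (\<lambda>n x. - M * f n x / - M) (\<lambda>x. - M * g x / - M) F"
    by (rule bounded_linear.uniform_limit[OF bounded_linear_divide])
  then show ?thesis
    using \<open>0 < M\<close> by simp
qed

lemma abs_exp_neg_mult_diff_le:
  fixes M B y z :: real
  assumes "0 \<le> M" "\<bar>y\<bar> \<le> B" "\<bar>z\<bar> \<le> B"
  shows "\<bar>exp (- M * y) - exp (- M * z)\<bar> \<le> exp (M * B)"
proof -
  have "- M * y \<le> M * B" "- M * z \<le> M * B"
    using assms mult_left_mono[of "- y" B M] mult_left_mono[of "- z" B M] by auto
  then have "exp (- M * y) \<le> exp (M * B)" "exp (- M * z) \<le> exp (M * B)"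
    by simp_all
  moreover have "0 < exp (- M * y)" "0 < exp (- M * z)"
    by simp_all
  ultimately show ?thesis
    unfolding abs_le_iff by linarith
qed

theorem lemma3p3:
  fixes M \<delta>0 l0 :: real
    and w0 :: "real \<Rightarrow> real"
    and w wt wx wxx :: "real \<Rightarrow> real \<Rightarrow> real"
  assumes M_pos: "M > 0" and delta_pos: "\<delta>0 > 0"
    and w0_meas: "w0 \<in> borel_measurable lborel"
    and w0_bdd: "\<exists>C. \<forall>x\<le>l0. \<bar>w0 x\<bar> \<le> C"
    and w0_zero: "\<exists>L. \<forall>x\<le>L. w0 x = 0"
    and w_bdd: "\<exists>B. \<forall>x\<le>l0. \<forall>t\<ge>0. \<bar>w x t\<bar> \<le> B"
    and w_cont: "continuous_on ({..l0} \<times> {0<..}) (\<lambda>(x,t). w x t)"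
    and wt_cont: "continuous_on ({..<l0} \<times> {0<..}) (\<lambda>(x,t). wt x t)"
    and wx_cont: "continuous_on ({..<l0} \<times> {0<..}) (\<lambda>(x,t). wx x t)"
    and wxx_cont: "continuous_on ({..<l0} \<times> {0<..}) (\<lambda>(x,t). wxx x t)"
    and dt: "\<And>x t. x < l0 \<Longrightarrow> t > 0 \<Longrightarrow> ((\<lambda>s. w x s) has_real_derivative wt x t) (at t)"
    and dx: "\<And>x t. x < l0 \<Longrightarrow> t > 0 \<Longrightarrow> ((\<lambda>y. w y t) has_real_derivative wx x t) (at x)"
    and dxx: "\<And>x t. x < l0 \<Longrightarrow> t > 0 \<Longrightarrow> ((\<lambda>y. wx y t) has_real_derivative wxx x t) (at x)"
    and pde: "\<And>x t. x < l0 \<Longrightarrow> t > 0 \<Longrightarrow> wt x t = wxx x t - M * (wx x t)\<^sup>2"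
    and init: "\<And>x. x \<le> l0 \<Longrightarrow> w x 0 = w0 x"
    and init_trace: "\<And>a b. a \<le> b \<Longrightarrow> b \<le> l0 \<Longrightarrow>
        ((\<lambda>t. LBINT x:{a..b}. \<bar>w x t - w0 x\<bar>) \<longlongrightarrow> 0) (at_right 0)"
    and bdry: "\<And>t. t > 0 \<Longrightarrow> w l0 t = \<delta>0"
  shows "\<And>a. a \<le> l0 \<Longrightarrow> uniform_limit {a..l0} (\<lambda>t x. w x t) (\<lambda>x. \<delta>0) at_top"
proof -
  fix a
  assume "a \<le> l0"
  obtain B where B: "\<And>x t. x \<le> l0 \<Longrightarrow> 0 \<le> t \<Longrightarrow> \<bar>w x t\<bar> \<le> B"
    using w_bdd by blast
  have "\<bar>\<delta>0\<bar> \<le> B"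
    using B[of l0 1] bdry[of 1] by simp
  define v where "v x t = exp (- M * w x t)" for x t
  have v_derivs:
    "((\<lambda>s. v x s) has_real_derivative - M * v x t * wt x t) (at t)"
    "((\<lambda>y. v y t) has_real_derivative - M * v x t * wx x t) (at x)"
    "((\<lambda>y. - M * v y t * wx y t) has_real_derivative - M * v x t * wt x t) (at x)"
    if "x < l0" "0 < t" for x t
    unfolding v_def
    using hopf_cole_has_derivatives[where wx = "\<lambda>y. wx y t", OF dt[OF that] dx[OF that] dxx[OF that] pde[OF that]]
    by simp_all
  have "uniform_limit {a..l0} (\<lambda>t x. v x t) (\<lambda>x. exp (- M * \<delta>0)) at_top"
  proof (rule heat_solution_uniform_limit_boundary_value[where K = "exp (M * B)"
        and vt = "\<lambda>x t. - M * v x t * wt x t" and vx = "\<lambda>x t. - M * v x t * wx x t"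
        and vxx = "\<lambda>x t. - M * v x t * wt x t"])
    show "continuous_on ({..l0} \<times> {0<..}) (\<lambda>(x, t). v x t)"
      using w_cont unfolding v_def case_prod_unfold by (intro continuous_intros)
    show "\<bar>v x t - exp (- M * \<delta>0)\<bar> \<le> exp (M * B)" if "x \<le> l0" "0 < t" for x t
      using abs_exp_neg_mult_diff_le[OF _ B \<open>\<bar>\<delta>0\<bar> \<le> B\<close>] M_pos that by (simp add: v_def)
  qed (use \<open>a \<le> l0\<close> bdry v_derivs in \<open>auto simp: v_def\<close>)
  then show "uniform_limit {a..l0} (\<lambda>t x. w x t) (\<lambda>x. \<delta>0) at_top"
    unfolding v_def
  proof (rule uniform_limit_from_exp_neg_mult[OF _ M_pos])
    show "\<forall>\<^sub>F t in at_top. \<forall>x\<in>{a..l0}. w x t \<le> B"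
      using eventually_ge_at_top[of 0] by eventually_elim (auto intro: B[THEN abs_le_D1])
  qed
qed

end
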